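(* For all odd $n\geqslant3$ and all even $n\geqslant8$, \[ \sum_{i=0}^{\lfloor\frac{n-1}{2}\rfloor}\binom{n}{i+1,\,n-2i-1,\,i}<\sum_{i=0}^{\lfloor\frac{n-1}{2}\rfloor}\binom{n}{i,\,n-2i,\,i}. \]
   Context: $\binom{n}{a,b,c}=\frac{n!}{a!\,b!\,c!}$ denotes the trinomial coefficient for nonnegative integers $a+b+c=n$. *)

theory Defs
  imports Main
begin

definition trinomial :: "nat \<Rightarrow> nat \<Rightarrow> nat \<Rightarrow> nat \<Rightarrow> nat" where
  "trinomial n a b c = fact n div (fact a * fact b * fact c)"

end

theory Submission
  imports Defs Complex_Main
begin

text \<open>
  Let \<open>T(n,k)\<close> be the coefficient of \<open>x^k\<close> in \<open>(x\<^sup>-\<^sup>1 + 1 + x)^n\<close>.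
  The left sum is \<open>T(n,1)\<close>, and the right sum is \<open>T(n,0)\<close> minus, for even \<open>n\<close>, its
  central term \<open>n choose (n/2)\<close>.  Multiplying by \<open>x\<^sup>-\<^sup>1 + 1 + x\<close> gives
  \<open>T(n+1,k) = T(n,k-1) + T(n,k) + T(n,k+1)\<close> with \<open>T(n,-1) = T(n,1)\<close>, so the drops
  \<open>D(n,k) = T(n,k) - T(n,k+1)\<close> obey the same recurrence for \<open>k > 0\<close> and
  \<open>D(n+1,0) = D(n,1)\<close>.  Hence all drops are nonnegative and \<open>D(n,0) > 0\<close> for
  \<open>n \<ge> 2\<close>, which settles odd \<open>n\<close>.  For \<open>n = 2m\<close>, applying the recurrence twice
  propagates the bounds \<open>4 D(2m,0) \<ge> 5 C\<^sub>m\<close> and \<open>4 D(2m,k) \<ge> 10 C\<^sub>m\<close> (\<open>k = 1, 2\<close>),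
  where \<open>C\<^sub>m = 2m choose m\<close>, from \<open>m = 4\<close> to \<open>m + 1\<close>, because \<open>C\<^sub>m\<^sub>+\<^sub>1 \<le> 4 C\<^sub>m\<close>.
\<close>

definition trinom :: "nat \<Rightarrow> nat \<Rightarrow> nat \<Rightarrow> nat" where
  "trinom n a c = (n choose a) * ((n - a) choose c)"

text \<open>In \<open>trinomial_row n k = T(n,k)\<close> the index \<open>i\<close> counts the factors contributing
  \<open>x\<^sup>-\<^sup>1\<close>, and \<open>i + k\<close> those contributing \<open>x\<close>.\<close>

definition trinomial_row :: "nat \<Rightarrow> nat \<Rightarrow> nat" where
  "trinomial_row n k = (\<Sum>i\<le>n. trinom n (i + k) i)"

definition row_drop :: "nat \<Rightarrow> nat \<Rightarrow> int" where
  "row_drop n k = int (trinomial_row n k) - int (trinomial_row n (Suc k))"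

lemma trinom_eq_0: "n < a + c \<Longrightarrow> trinom n a c = 0"
  unfolding trinom_def by (cases "a \<le> n") auto

lemma trinom_0_0 [simp]: "trinom n 0 0 = 1"
  unfolding trinom_def by simp

lemma trinom_mult_fact:
  assumes "a + c \<le> n"
  shows "trinom n a c * (fact a * fact c * fact (n - a - c)) = fact n"
proof -
  have outer: "fact a * fact (n - a) * (n choose a) = (fact n :: nat)"
    using assms by (intro binomial_fact_lemma) simp
  have inner: "fact c * fact (n - a - c) * ((n - a) choose c) = (fact (n - a) :: nat)"
    using assms binomial_fact_lemma[of c "n - a"] by (simp add: diff_diff_add)
  have "trinom n a c * (fact a * fact c * fact (n - a - c))
      = (n choose a) * fact a * (fact c * fact (n - a - c) * ((n - a) choose c))"
    unfolding trinom_def by (simp only: ac_simps)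
  also have "\<dots> = (n choose a) * fact a * fact (n - a)"
    by (simp only: inner)
  also have "\<dots> = fact n"
    using outer by (simp only: ac_simps)
  finally show ?thesis .
qed

lemma trinom_commute: "trinom n a c = trinom n c a"
proof (cases "a + c \<le> n")
  case True
  have "n - c - a = n - a - c" by simp
  then have "trinom n a c * (fact a * fact c * fact (n - a - c))
      = trinom n c a * (fact a * fact c * fact (n - a - c))"
    using trinom_mult_fact[OF True] trinom_mult_fact[of c a n] True by (simp add: ac_simps)
  then show ?thesis by simp
next
  case False
  then show ?thesis by (simp add: trinom_eq_0)
qed

lemma trinomial_eq_trinom:
  assumes "a + b + c = n"
  shows "trinomial n a b c = trinom n a c"
proof -
  have "b = n - a - c"
    using assms by simp
  then have "fact n = trinom n a c * (fact a * fact b * fact c)"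
    using trinom_mult_fact[of a c n] assms by (simp add: ac_simps)
  then show ?thesis
    unfolding trinomial_def by simp
qed

lemma trinom_Suc_Suc:
  "trinom (Suc n) (Suc a) c
     = trinom n a c + trinom n (Suc a) c + (if c = 0 then 0 else trinom n (Suc a) (c - 1))"
proof (cases "a < n")
  case True
  then obtain m where "n - a = Suc m" "n - Suc a = m"
    by (metis Suc_diff_Suc)
  then show ?thesis
    unfolding trinom_def by (cases c) (simp_all add: algebra_simps)
next
  case False
  then show ?thesis
    unfolding trinom_def by (cases c) auto
qed

lemma trinomial_row_eq_sum_atMost:
  "n \<le> N \<Longrightarrow> trinomial_row n k = (\<Sum>i\<le>N. trinom n (i + k) i)"
  unfolding trinomial_row_def
  by (rule sum.mono_neutral_left) (auto intro!: trinom_eq_0)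

lemma trinomial_row_0: "trinomial_row 0 k = (if k = 0 then 1 else 0)"
  unfolding trinomial_row_def trinom_def by simp

lemma trinomial_row_Suc_Suc:
  "trinomial_row (Suc n) (Suc k)
     = trinomial_row n k + trinomial_row n (Suc k) + trinomial_row n (Suc (Suc k))"
proof -
  have "trinomial_row (Suc n) (Suc k)
      = (\<Sum>i\<le>Suc n. trinom n (i + k) i) + (\<Sum>i\<le>Suc n. trinom n (i + Suc k) i)
        + (\<Sum>i\<le>Suc n. if i = 0 then 0 else trinom n (Suc (i + k)) (i - 1))"
    unfolding trinomial_row_def by (simp add: trinom_Suc_Suc sum.distrib)
  also have "(\<Sum>i\<le>Suc n. if i = 0 then 0 else trinom n (Suc (i + k)) (i - 1))
      = trinomial_row n (Suc (Suc k))"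
    unfolding trinomial_row_def by (subst sum.atMost_Suc_shift) simp
  finally show ?thesis
    by (simp add: trinomial_row_eq_sum_atMost[of n "Suc n"])
qed

lemma trinomial_row_Suc_0:
  "trinomial_row (Suc n) 0 = trinomial_row n 0 + 2 * trinomial_row n 1"
proof -
  have "trinomial_row (Suc n) 0 = 1 + (\<Sum>i\<le>n. trinom (Suc n) (Suc i) (Suc i))"
    unfolding trinomial_row_def by (subst sum.atMost_Suc_shift) simp
  also have "\<dots> = (1 + (\<Sum>i\<le>n. trinom n (Suc i) (Suc i))) + 2 * (\<Sum>i\<le>n. trinom n (i + 1) i)"
    by (simp add: trinom_Suc_Suc trinom_commute[of n i "Suc i" for i] sum.distrib)
  also have "1 + (\<Sum>i\<le>n. trinom n (Suc i) (Suc i)) = trinomial_row n 0"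
    by (simp only: trinomial_row_eq_sum_atMost[of n "Suc n" 0, OF le_SucI[OF le_refl]]
        sum.atMost_Suc_shift) simp
  finally show ?thesis
    unfolding trinomial_row_def by simp
qed

lemma row_drop_0: "row_drop 0 k = (if k = 0 then 1 else 0)"
  unfolding row_drop_def by (simp add: trinomial_row_0)

lemma row_drop_Suc_0: "row_drop (Suc n) 0 = row_drop n 1"
  unfolding row_drop_def using trinomial_row_Suc_0[of n] trinomial_row_Suc_Suc[of n 0] by simp

lemma row_drop_Suc_Suc:
  "row_drop (Suc n) (Suc k) = row_drop n k + row_drop n (Suc k) + row_drop n (Suc (Suc k))"
  unfolding row_drop_def
  using trinomial_row_Suc_Suc[of n k] trinomial_row_Suc_Suc[of n "Suc k"] by simp

lemma row_drop_nonneg: "row_drop n k \<ge> 0"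
proof (induction n arbitrary: k)
  case 0
  then show ?case by (simp add: row_drop_0)
next
  case (Suc n)
  then show ?case
    by (cases k) (simp_all add: row_drop_Suc_0 row_drop_Suc_Suc)
qed

lemma row_drop_1_pos: "n \<ge> 1 \<Longrightarrow> row_drop n 1 > 0"
proof (induction n rule: nat_induct_at_least)
  case base
  then show ?case by (simp add: row_drop_Suc_Suc row_drop_0)
next
  case (Suc n)
  then show ?case
    using row_drop_nonneg[of n 0] row_drop_nonneg[of n 2]
    by (simp add: row_drop_Suc_Suc numeral_2_eq_2)
qed

lemma row_drop_0_pos: "n \<ge> 2 \<Longrightarrow> row_drop n 0 > 0"
  using row_drop_1_pos[of "n - 1"] row_drop_Suc_0[of "n - 1"] by (cases n) auto

lemma central_binomial_Suc_le: "(2 * Suc m) choose (Suc m) \<le> 4 * ((2 * m) choose m)"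
proof -
  have upper: "Suc (2 * m) choose Suc m \<le> 2 * ((2 * m) choose m)"
    using binomial_maximum'[of m "Suc m"] by simp
  have lower: "Suc (2 * m) choose m \<le> 2 * ((2 * m) choose m)"
    using binomial_maximum'[of m "m - 1"] by (cases m) simp_all
  show ?thesis
    using upper lower by simp
qed

lemma row_drop_even_lower_bounds:
  assumes "m \<ge> 4"
  shows "4 * row_drop (2 * m) 0 \<ge> 5 * int ((2 * m) choose m)
    \<and> 4 * row_drop (2 * m) 1 \<ge> 10 * int ((2 * m) choose m)
    \<and> 4 * row_drop (2 * m) 2 \<ge> 10 * int ((2 * m) choose m)"
  using assms
proof (induction m rule: nat_induct_at_least)
  case base
  have "row_drop 8 0 = 91" "row_drop 8 1 = 232" "row_drop 8 2 = 280"
    by (simp_all add: numeral_eq_Suc row_drop_Suc_0 row_drop_Suc_Suc row_drop_0)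
  moreover have "(8::nat) choose 4 = 70"
    by (simp add: numeral_eq_Suc)
  ultimately show ?case by simp
next
  case (Suc m)
  let ?D = "row_drop (2 * m)"
  have "2 * Suc m = Suc (Suc (2 * m))" by simp
  then have "row_drop (2 * Suc m) 0 = ?D 0 + ?D 1 + ?D 2"
    and "row_drop (2 * Suc m) 1 = ?D 1 + (?D 0 + ?D 1 + ?D 2) + (?D 1 + ?D 2 + ?D 3)"
    and "row_drop (2 * Suc m) 2
      = (?D 0 + ?D 1 + ?D 2) + (?D 1 + ?D 2 + ?D 3) + (?D 2 + ?D 3 + ?D 4)"
    by (simp_all add: row_drop_Suc_0 row_drop_Suc_Suc eval_nat_numeral)
  moreover have "int ((2 * Suc m) choose Suc m) \<le> 4 * int ((2 * m) choose m)"
    using central_binomial_Suc_le[of m] by linarith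
  ultimately show ?case
    using Suc.IH row_drop_nonneg[of "2 * m" 3] row_drop_nonneg[of "2 * m" 4] by linarith
qed

lemma row_drop_0_gt_central_binomial:
  assumes "m \<ge> 4"
  shows "row_drop (2 * m) 0 > int ((2 * m) choose m)"
proof -
  have "4 * row_drop (2 * m) 0 \<ge> 5 * int ((2 * m) choose m)"
    using row_drop_even_lower_bounds[OF assms] by blast
  moreover have "(2 * m) choose m > 0" by simp
  ultimately show ?thesis by linarith
qed

lemma sum_trinomial_off_centre:
  assumes "n \<ge> 1"
  shows "(\<Sum>i = 0..(n - 1) div 2. trinomial n (i + 1) (n - 2 * i - 1) i) = trinomial_row n 1"
proof -
  have "(\<Sum>i = 0..(n - 1) div 2. trinomial n (i + 1) (n - 2 * i - 1) i)
      = (\<Sum>i = 0..(n - 1) div 2. trinom n (i + 1) i)"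
    using assms by (intro sum.cong refl trinomial_eq_trinom) auto
  also have "\<dots> = trinomial_row n 1"
    unfolding trinomial_row_def by (rule sum.mono_neutral_left) (auto intro!: trinom_eq_0)
  finally show ?thesis .
qed

lemma trinomial_row_0_eq: "trinomial_row n 0 = (\<Sum>i\<le>n div 2. trinom n i i)"
  unfolding trinomial_row_def add_0_right
  by (rule sum.mono_neutral_right) (auto intro!: trinom_eq_0)

lemma sum_trinomial_centre:
  assumes "n \<ge> 1"
  shows "int (\<Sum>i = 0..(n - 1) div 2. trinomial n i (n - 2 * i) i)
    = int (trinomial_row n 0) - (if even n then int (n choose (n div 2)) else 0)"
proof -
  have "(\<Sum>i = 0..(n - 1) div 2. trinomial n i (n - 2 * i) i) = (\<Sum>i\<le>(n - 1) div 2. trinom n i i)"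
    unfolding atLeast0AtMost by (intro sum.cong refl trinomial_eq_trinom) auto
  moreover have "trinomial_row n 0
      = (\<Sum>i\<le>(n - 1) div 2. trinom n i i) + (if even n then n choose (n div 2) else 0)"
  proof (cases "even n")
    case True
    then obtain m where "n = 2 * m" ..
    with assms obtain j where "n = 2 * Suc j"
      by (cases m) auto
    then have "(n - 1) div 2 = j" "n div 2 = Suc j" "trinom n (Suc j) (Suc j) = n choose (n div 2)"
      unfolding trinom_def by simp_all
    then show ?thesis
      using True by (simp add: trinomial_row_0_eq)
  next
    case False
    then have "(n - 1) div 2 = n div 2" by presburger
    then show ?thesis
      using False by (simp add: trinomial_row_0_eq)
  qed
  ultimately show ?thesis by simp
qed

theorem lemma5p7:
  fixes n :: nat
  assumes "(odd n \<and> n \<ge> 3) \<or> (even n \<and> n \<ge> 8)"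
  shows "(\<Sum>i = 0..(n - 1) div 2. trinomial n (i + 1) (n - 2 * i - 1) i)
         < (\<Sum>i = 0..(n - 1) div 2. trinomial n i (n - 2 * i) i)"
proof -
  have n: "n \<ge> 1" using assms by auto
  have "int (trinomial_row n 1)
      < int (trinomial_row n 0) - (if even n then int (n choose (n div 2)) else 0)"
  proof (cases "even n")
    case True
    then obtain m where "n = 2 * m" and "m \<ge> 4" using assms by auto
    then have "row_drop n 0 > int (n choose (n div 2))"
      using row_drop_0_gt_central_binomial by simp
    then show ?thesis
      using True unfolding row_drop_def by simp
  next
    case False
    with assms have "n \<ge> 2" by auto
    then show ?thesis
      using row_drop_0_pos False unfolding row_drop_def by simp
  qed
  then have "int (\<Sum>i = 0..(n - 1) div 2. trinomial n (i + 1) (n - 2 * i - 1) i)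
      < int (\<Sum>i = 0..(n - 1) div 2. trinomial n i (n - 2 * i) i)"
    by (simp only: sum_trinomial_off_centre[OF n] sum_trinomial_centre[OF n])
  then show ?thesis
    by (simp only: of_nat_less_iff)
qed

end
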